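(* Let $\tfrac12<\sigma<1$. Then, as $n\to\infty$, $$\frac{1}{n^{2(1-\sigma)}}\int_0^1\Big|\sum_{k=1}^n\frac{1}{k^{\sigma+it}}\Big|^2dt=\frac{1}{1-\sigma}\arctan\Big(\frac{1}{1-\sigma}\Big)+O_\sigma\Big(\frac{1}{n^{2(1-\sigma)/3}}\Big).$$ *)

theory Defs
  imports "HOL-Analysis.Analysis" "HOL-Library.Landau_Symbols"
begin

definition zeta_partial :: "nat \<Rightarrow> real \<Rightarrow> real \<Rightarrow> complex" where
  "zeta_partial n \<sigma> t = (\<Sum>k=1..n. of_nat k powr (- Complex \<sigma> t))"

end

theory Submission
  imports Defs
begin

text \<open>
  Each term \<open>k^(-s)\<close> differs from the integral of \<open>x^(-s)\<close> over \<open>[k, k+1]\<close> by at most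
  \<open>|s| k^(-\<sigma>-1)\<close> (Taylor's theorem for \<open>x^(1-s)/(1-s)\<close>). These errors are summable, so the
  partial sum equals \<open>n^(1-s)/(1-s)\<close> up to an error bounded uniformly for \<open>0 \<le> t \<le> 1\<close>.
  The main term has squared modulus \<open>n^(2(1-\<sigma>)) / ((1-\<sigma>)^2 + t^2)\<close>, whose integral over
  \<open>[0, 1]\<close> is the arctangent term, while the cross terms contribute only \<open>O(n^(1-\<sigma>))\<close>.
  The error is therefore even \<open>O(n^(-(1-\<sigma>)))\<close>, and only \<open>0 < \<sigma> < 1\<close> is needed.
\<close>

lemma norm_powr_antiderivative_step_le:
  fixes a :: real and s :: complex
  assumes a: "a > 0" and s1: "s \<noteq> 1" and Re_s: "Re s \<ge> 0"
  shows "cmod (of_real (a+1) powr (1-s) / (1-s) - of_real a powr (1-s) / (1-s) - of_real a powr (-s))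
         \<le> cmod s * a powr (- Re s - 1)"
proof -
  define S where "S = complex_of_real ` {a..a+1}"
  define f where "f = (\<lambda>i::nat. if i = 0 then (\<lambda>z::complex. z powr (1-s) / (1-s))
        else if i = 1 then (\<lambda>z. z powr (-s)) else (\<lambda>z. -s * z powr (-s-1)))"
  have "convex S" unfolding S_def
    by (intro convex_linear_image convex_real_interval) (auto intro: bounded_linear.linear bounded_linear_of_real)
  moreover have "(f i has_field_derivative f (Suc i) x) (at x within S)" if "x \<in> S" "i \<le> 1" for i x
  proof -
    have x: "x \<notin> \<real>\<^sub>\<le>\<^sub>0" using that a by (auto simp: S_def nonpos_Reals_def)
    consider "i = 0" | "i = 1" using \<open>i \<le> 1\<close> by linarith
    then show ?thesis
    proof cases
      case 1
      have "((\<lambda>z. z powr (1-s) / (1-s)) has_field_derivative (1-s) * x powr (1-s-1) / (1-s)) (at x)"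
        using has_field_derivative_powr[OF x] by (rule DERIV_cdivide)
      with 1 s1 show ?thesis by (auto simp: f_def intro: has_field_derivative_at_within)
    next
      case 2
      with has_field_derivative_powr[OF x, of "-s"] show ?thesis
        by (auto simp: f_def intro: has_field_derivative_at_within)
    qed
  qed
  moreover have "cmod (f (Suc 1) x) \<le> cmod s * a powr (- Re s - 1)" if "x \<in> S" for x
  proof -
    obtain r where r: "r \<in> {a..a+1}" "x = of_real r" using \<open>x \<in> S\<close> unfolding S_def by blast
    have "cmod (f (Suc 1) x) = cmod s * r powr (- Re s - 1)"
      using r a by (simp add: f_def norm_mult norm_powr_real_powr)
    also have "\<dots> \<le> cmod s * a powr (- Re s - 1)"
      using r a Re_s by (intro mult_left_mono powr_mono2') auto
    finally show ?thesis .
  qed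
  ultimately have "cmod (f 0 (of_real (a+1)) - (\<Sum>i\<le>1. f i (of_real a) * (of_real (a+1) - of_real a) ^ i / fact i))
        \<le> cmod s * a powr (- Re s - 1) * cmod (of_real (a+1) - of_real a :: complex) ^ Suc 1 / fact 1"
    by (intro field_Taylor) (use a in \<open>auto simp: S_def image_iff intro!: bexI[of _ "a+1"]\<close>)
  then show ?thesis by (simp add: f_def diff_diff_eq)
qed

lemma sum_minus_telescope:
  fixes g F :: "nat \<Rightarrow> 'a::ab_group_add"
  shows "(\<Sum>k=1..Suc m. g k) - F (Suc m) = g (Suc m) - F 1 - (\<Sum>k=1..m. F (Suc k) - F k - g k)"
  by (induction m) (simp_all add: algebra_simps)

lemma zeta_partial_approx:
  fixes \<sigma> t :: real
  assumes \<sigma>: "0 < \<sigma>" "\<sigma> < 1" and n: "n \<ge> 1"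
  shows "cmod (zeta_partial n \<sigma> t - of_nat n powr (1 - Complex \<sigma> t) / (1 - Complex \<sigma> t))
     \<le> 1 + 1 / (1 - \<sigma>) + cmod (Complex \<sigma> t) * (\<Sum>k. real k powr (-\<sigma>-1))"
proof -
  define s where "s = Complex \<sigma> t"
  define F where "F = (\<lambda>k::nat. of_nat k powr (1-s) / (1-s))"
  define g where "g = (\<lambda>k::nat. of_nat k powr (-s))"
  have Re_s: "Re s = \<sigma>" by (simp add: s_def)
  have "s \<noteq> 1" using \<sigma> by (auto simp: s_def complex_eq_iff)
  obtain m where m: "n = Suc m" using n by (cases n) auto
  have step: "cmod (F (Suc k) - F k - g k) \<le> cmod s * real k powr (-\<sigma>-1)" if "k \<ge> 1" for k
    using norm_powr_antiderivative_step_le[of "real k" s] that \<open>s \<noteq> 1\<close> \<sigma> Re_s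
    by (simp add: F_def g_def add.commute)
  have summable: "summable (\<lambda>k. real k powr (-\<sigma>-1))"
    using \<sigma> by (simp add: summable_real_powr_iff)
  have "cmod (\<Sum>k=1..m. F (Suc k) - F k - g k) \<le> (\<Sum>k=1..m. cmod s * real k powr (-\<sigma>-1))"
    by (intro sum_norm_le) (use step in auto)
  also have "\<dots> \<le> cmod s * (\<Sum>k. real k powr (-\<sigma>-1))"
    using sum_le_suminf[OF summable, of "{1..m}"] by (simp add: sum_distrib_left[symmetric] mult_left_mono)
  finally have errors: "cmod (\<Sum>k=1..m. F (Suc k) - F k - g k) \<le> cmod s * (\<Sum>k. real k powr (-\<sigma>-1))" .
  have "cmod (g n) = real n powr (-\<sigma>)"
    by (simp add: g_def norm_powr_real_powr Re_s)
  also have "\<dots> \<le> 1"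
    using \<sigma> n by (simp add: powr_minus inverse_le_1_iff ge_one_powr_ge_zero)
  finally have last_term: "cmod (g n) \<le> 1" .
  have "1 - \<sigma> \<le> cmod (1 - s)"
    using abs_Re_le_cmod[of "1-s"] Re_s by auto
  then have first_term: "cmod (F 1) \<le> 1 / (1 - \<sigma>)"
    using \<sigma> by (simp add: F_def norm_divide frac_le)
  have "zeta_partial n \<sigma> t - F n = g n - F 1 - (\<Sum>k=1..m. F (Suc k) - F k - g k)"
    using sum_minus_telescope[of g m F] by (simp add: m zeta_partial_def g_def s_def)
  then have "cmod (zeta_partial n \<sigma> t - F n)
      \<le> cmod (g n) + cmod (F 1) + cmod (\<Sum>k=1..m. F (Suc k) - F k - g k)"
    by (metis norm_triangle_ineq4 add_right_mono order_trans)
  also have "\<dots> \<le> 1 + 1 / (1 - \<sigma>) + cmod s * (\<Sum>k. real k powr (-\<sigma>-1))"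
    using errors last_term first_term by linarith
  finally show ?thesis
    unfolding F_def s_def .
qed

definition zeta_partial_approx_const :: "real \<Rightarrow> real" where
  "zeta_partial_approx_const \<sigma> = 1 + 1 / (1 - \<sigma>) + 2 * (\<Sum>k. real k powr (-\<sigma>-1))"

lemma zeta_partial_approx_const_nonneg:
  assumes "0 < \<sigma>" "\<sigma> < 1"
  shows "zeta_partial_approx_const \<sigma> \<ge> 0"
  using assms suminf_nonneg[of "\<lambda>k. real k powr (-\<sigma>-1)"]
  by (simp add: zeta_partial_approx_const_def summable_real_powr_iff)

lemma zeta_partial_approx_unit_interval:
  assumes "0 < \<sigma>" "\<sigma> < 1" "n \<ge> 1" "t \<in> {0..1}"
  shows "cmod (zeta_partial n \<sigma> t - of_nat n powr (1 - Complex \<sigma> t) / (1 - Complex \<sigma> t))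
     \<le> zeta_partial_approx_const \<sigma>"
proof -
  have "cmod (Complex \<sigma> t) \<le> \<bar>\<sigma>\<bar> + \<bar>t\<bar>"
    using cmod_le[of "Complex \<sigma> t"] by simp
  then have "cmod (Complex \<sigma> t) \<le> 2" using assms by simp
  moreover have "0 \<le> (\<Sum>k. real k powr (-\<sigma>-1))"
    using assms by (intro suminf_nonneg) (auto simp: summable_real_powr_iff)
  ultimately have "cmod (Complex \<sigma> t) * (\<Sum>k. real k powr (-\<sigma>-1)) \<le> 2 * (\<Sum>k. real k powr (-\<sigma>-1))"
    by (intro mult_right_mono)
  then show ?thesis
    using zeta_partial_approx[of \<sigma> n t] assms unfolding zeta_partial_approx_const_def by linarith
qed

lemma continuous_on_zeta_partial: "continuous_on A (zeta_partial n \<sigma>)"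
  unfolding zeta_partial_def Complex_eq by (intro continuous_intros) auto

lemma abs_norm_power2_diff_le:
  fixes p m :: "'a::real_normed_vector"
  assumes "norm (p - m) \<le> C" and "norm m \<le> B"
  shows "\<bar>norm p ^ 2 - norm m ^ 2\<bar> \<le> C * (2 * B + C)"
proof -
  have close: "\<bar>norm p - norm m\<bar> \<le> C"
    using assms(1) norm_triangle_ineq3[of p m] by linarith
  have "norm p ^ 2 - norm m ^ 2 = (norm p - norm m) * (norm p + norm m)"
    by (simp add: power2_eq_square algebra_simps)
  then have "\<bar>norm p ^ 2 - norm m ^ 2\<bar> = \<bar>norm p - norm m\<bar> * (norm p + norm m)"
    by (simp add: abs_mult)
  also have "\<dots> \<le> C * (2 * B + C)"
    using close assms(2) by (intro mult_mono) auto
  finally show ?thesis .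
qed

lemma has_integral_inverse_sum_squares:
  fixes \<alpha> a b :: real
  assumes "\<alpha> > 0" and "a \<le> b"
  shows "((\<lambda>t. 1 / (\<alpha>\<^sup>2 + t\<^sup>2)) has_integral (arctan (b / \<alpha>) - arctan (a / \<alpha>)) / \<alpha>) {a..b}"
proof -
  have "((\<lambda>x. arctan (x / \<alpha>) / \<alpha>) has_real_derivative 1 / (\<alpha>\<^sup>2 + t\<^sup>2)) (at t)" for t
  proof -
    have "((\<lambda>x. arctan (x / \<alpha>) / \<alpha>) has_real_derivative inverse (1 + (t / \<alpha>)\<^sup>2) * (1 / \<alpha>) / \<alpha>) (at t)"
      by (intro DERIV_cdivide DERIV_chain2[OF DERIV_arctan] DERIV_ident)
    moreover have "inverse (1 + (t / \<alpha>)\<^sup>2) * (1 / \<alpha>) / \<alpha> = 1 / (\<alpha>\<^sup>2 + t\<^sup>2)"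
    proof -
      have "\<alpha> * (\<alpha> * \<alpha>) + \<alpha> * (t * t) > 0"
        using assms by (intro add_pos_nonneg) auto
      then show ?thesis
        using assms by (simp add: field_simps power2_eq_square)
    qed
    ultimately show ?thesis by simp
  qed
  then show ?thesis
    using assms fundamental_theorem_of_calculus[of a b "\<lambda>x. arctan (x / \<alpha>) / \<alpha>" "\<lambda>t. 1 / (\<alpha>\<^sup>2 + t\<^sup>2)"]
    by (simp add: has_real_derivative_iff_has_vector_derivative[symmetric] has_field_derivative_at_within
        diff_divide_distrib)
qed

lemma norm_zeta_partial_main_term_power2:
  fixes \<sigma> t :: real
  shows "(cmod (of_nat n powr (1 - Complex \<sigma> t) / (1 - Complex \<sigma> t)))\<^sup>2
    = real n powr (2 * (1 - \<sigma>)) / ((1 - \<sigma>)\<^sup>2 + t\<^sup>2)"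
proof -
  have "cmod (of_nat n powr (1 - Complex \<sigma> t)) = real n powr (1 - \<sigma>)"
    using norm_powr_real_powr[of "of_nat n" "1 - Complex \<sigma> t"] by simp
  moreover have "(cmod (1 - Complex \<sigma> t))\<^sup>2 = (1 - \<sigma>)\<^sup>2 + t\<^sup>2"
    by (simp add: cmod_power2)
  moreover have "(real n powr (1 - \<sigma>))\<^sup>2 = real n powr (2 * (1 - \<sigma>))"
    by (simp add: power2_eq_square powr_add[symmetric])
  ultimately show ?thesis
    by (simp add: norm_divide power_divide)
qed

lemma mean_square_zeta_partial_error:
  fixes \<sigma> :: real
  assumes \<sigma>: "0 < \<sigma>" "\<sigma> < 1" and n: "n \<ge> 1"
  defines "C \<equiv> zeta_partial_approx_const \<sigma>"
  shows "\<bar>integral {0..1} (\<lambda>t. (cmod (zeta_partial n \<sigma> t))\<^sup>2)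
           - real n powr (2 * (1 - \<sigma>)) * (1 / (1 - \<sigma>) * arctan (1 / (1 - \<sigma>)))\<bar>
     \<le> C * (2 * real n powr (1 - \<sigma>) / (1 - \<sigma>) + C)"
proof -
  define \<alpha> where "\<alpha> = 1 - \<sigma>"
  define M where "M = (\<lambda>t. of_nat n powr (1 - Complex \<sigma> t) / (1 - Complex \<sigma> t))"
  have \<alpha>: "\<alpha> > 0" using \<sigma> by (simp add: \<alpha>_def)
  have M_le: "cmod (M t) \<le> real n powr \<alpha> / \<alpha>" for t
  proof -
    have numerator: "cmod (of_nat n powr (1 - Complex \<sigma> t)) = real n powr \<alpha>"
      using norm_powr_real_powr[of "of_nat n" "1 - Complex \<sigma> t"] by (simp add: \<alpha>_def)
    have "\<alpha> \<le> cmod (1 - Complex \<sigma> t)"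
      using abs_Re_le_cmod[of "1 - Complex \<sigma> t"] \<alpha> by (auto simp: \<alpha>_def)
    then show ?thesis
      unfolding M_def norm_divide numerator using \<alpha> by (intro divide_left_mono) (auto intro!: mult_pos_pos)
  qed
  have pointwise: "norm ((cmod (zeta_partial n \<sigma> t))\<^sup>2 - (cmod (M t))\<^sup>2) \<le> C * (2 * real n powr \<alpha> / \<alpha> + C)"
    if "t \<in> {0..1}" for t
    using abs_norm_power2_diff_le[OF zeta_partial_approx_unit_interval[OF \<sigma> n that] M_le[unfolded M_def]]
    by (simp add: M_def C_def)
  have "((\<lambda>t. (cmod (M t))\<^sup>2) has_integral real n powr (2 * \<alpha>) * (1 / \<alpha> * arctan (1 / \<alpha>))) {0..1}"
    using has_integral_mult_right[OF has_integral_inverse_sum_squares[OF \<alpha>, of 0 1], of "real n powr (2 * \<alpha>)"]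
    by (simp add: M_def norm_zeta_partial_main_term_power2 \<alpha>_def)
  moreover have "(\<lambda>t. (cmod (zeta_partial n \<sigma> t))\<^sup>2) integrable_on {0..1}"
    by (intro integrable_continuous_interval continuous_intros continuous_on_zeta_partial)
  ultimately have "((\<lambda>t. (cmod (zeta_partial n \<sigma> t))\<^sup>2 - (cmod (M t))\<^sup>2) has_integral
      integral {0..1} (\<lambda>t. (cmod (zeta_partial n \<sigma> t))\<^sup>2) - real n powr (2 * \<alpha>) * (1 / \<alpha> * arctan (1 / \<alpha>))) {0..1}"
    by (intro has_integral_diff integrable_integral)
  from has_integral_bound_real[OF _ _ this, of _ "{}"] pointwise
  show ?thesis
    using zeta_partial_approx_const_nonneg[OF \<sigma>] \<alpha> by (simp add: \<alpha>_def C_def)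
qed

lemma mean_square_zeta_partial_normalized_error:
  fixes \<sigma> :: real
  assumes \<sigma>: "0 < \<sigma>" "\<sigma> < 1" and n: "n \<ge> 1"
  defines "C \<equiv> zeta_partial_approx_const \<sigma>"
  shows "\<bar>integral {0..1} (\<lambda>t. (cmod (zeta_partial n \<sigma> t))\<^sup>2) / real n powr (2 * (1 - \<sigma>))
           - 1 / (1 - \<sigma>) * arctan (1 / (1 - \<sigma>))\<bar>
     \<le> (2 * C / (1 - \<sigma>) + C\<^sup>2) / real n powr (1 - \<sigma>)"
proof -
  define I where "I = integral {0..1} (\<lambda>t. (cmod (zeta_partial n \<sigma> t))\<^sup>2)"
  define A where "A = 1 / (1 - \<sigma>) * arctan (1 / (1 - \<sigma>))"
  define x where "x = real n powr (1 - \<sigma>)"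
  have "x \<ge> 1" using \<sigma> n by (simp add: x_def ge_one_powr_ge_zero)
  have C: "C \<ge> 0" using zeta_partial_approx_const_nonneg[OF \<sigma>] by (simp add: C_def)
  have x_sq: "real n powr (2 * (1 - \<sigma>)) = x\<^sup>2"
    by (simp add: x_def power2_eq_square powr_add[symmetric])
  have "\<bar>I / x\<^sup>2 - A\<bar> = \<bar>I - x\<^sup>2 * A\<bar> / x\<^sup>2"
    using \<open>x \<ge> 1\<close> by (simp add: field_simps)
  also have "\<dots> \<le> C * (2 * x / (1 - \<sigma>) + C) / x\<^sup>2"
  proof (intro divide_right_mono)
    show "\<bar>I - x\<^sup>2 * A\<bar> \<le> C * (2 * x / (1 - \<sigma>) + C)"
      using mean_square_zeta_partial_error[OF \<sigma> n] unfolding x_sq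
      by (simp add: I_def A_def C_def x_def)
  qed simp
  also have "\<dots> = (2 * C / (1 - \<sigma>)) / x + C\<^sup>2 / x\<^sup>2"
    using \<open>x \<ge> 1\<close> \<sigma> by (simp add: field_simps power2_eq_square)
  also have "\<dots> \<le> (2 * C / (1 - \<sigma>)) / x + C\<^sup>2 / x"
    using \<open>x \<ge> 1\<close> C by (intro add_left_mono divide_left_mono) (auto simp: power2_eq_square)
  finally show ?thesis
    unfolding x_sq x_def[symmetric] I_def[symmetric] A_def[symmetric] by (simp add: add_divide_distrib)
qed

theorem corollary5p6:
  fixes \<sigma> :: real
  assumes "1/2 < \<sigma>" and "\<sigma> < 1"
  shows "(\<lambda>n::nat. integral {0..1} (\<lambda>t. (cmod (zeta_partial n \<sigma> t))\<^sup>2) / real n powr (2 * (1 - \<sigma>))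
            - 1 / (1 - \<sigma>) * arctan (1 / (1 - \<sigma>)))
         \<in> O(\<lambda>n. 1 / real n powr (2 * (1 - \<sigma>) / 3))"
proof (rule bigoI)
  have \<sigma>: "0 < \<sigma>" "\<sigma> < 1" using assms by auto
  define C where "C = zeta_partial_approx_const \<sigma>"
  define K where "K = 2 * C / (1 - \<sigma>) + C\<^sup>2"
  have "K \<ge> 0" using zeta_partial_approx_const_nonneg[OF \<sigma>] \<sigma> by (simp add: K_def C_def)
  show "\<forall>\<^sub>F n in at_top. norm (integral {0..1} (\<lambda>t. (cmod (zeta_partial n \<sigma> t))\<^sup>2) / real n powr (2 * (1 - \<sigma>))
            - 1 / (1 - \<sigma>) * arctan (1 / (1 - \<sigma>))) \<le> K * norm (1 / real n powr (2 * (1 - \<sigma>) / 3))"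
    using eventually_ge_at_top[of "1::nat"]
  proof eventually_elim
    case (elim n)
    have "real n powr (2 * (1 - \<sigma>) / 3) \<le> real n powr (1 - \<sigma>)"
      using elim \<sigma> by (intro powr_mono) auto
    then have "K / real n powr (1 - \<sigma>) \<le> K / real n powr (2 * (1 - \<sigma>) / 3)"
      using elim \<open>K \<ge> 0\<close> by (intro divide_left_mono) auto
    with mean_square_zeta_partial_normalized_error[OF \<sigma> elim] show ?case
      by (simp add: K_def C_def)
  qed
qed

end
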